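(* Let $A \in \mathbb{R}_+^{m\times n}$ be a matrix with nonnegative entries, let $y \in \mathbb{Z}_+^m$, let $\beta>0$, and define $F(f) = \mathbb{1}^T A f - \sum_{i=1}^m y_i \log(e_i^T A f + \beta)$ for $f \in \mathbb{R}_+^n$, where $\mathbb{1}$ is the all-ones vector in $\mathbb{R}^m$ and $e_i$ is the $i$-th canonical basis vector. Then $F$ is Lipschitz continuously differentiable on $\mathbb{R}_+^n$, with the Lipschitz constant $L$ of $\nabla F$ on $\mathbb{R}_+^n$ satisfying $$L \le \frac{\max(y)}{\beta^2}\,\|A\|_2^2 \le \frac{\max(y)}{\beta^2}\,\max(A^T\mathbb{1})\,\max(A\mathbb{1}),$$ where $\max(v)$ denotes the largest entry of a vector $v$ (and in $A^T\mathbb{1}$ the vector $\mathbb{1}$ is the all-ones vector of $\mathbb{R}^m$, in $A\mathbb{1}$ of $\mathbb{R}^n$).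
   Context: $\|A\|_2$ denotes the spectral norm of $A$. $F$ is the negative Poisson log-likelihood (up to constants) with a small offset $\beta$. *)

theory Defs
  imports "HOL-Analysis.Analysis"
begin

definition nonneg_orthant :: "(real ^ 'n) set" where
  "nonneg_orthant = {f. \<forall>j. 0 \<le> f $ j}"

definition ones_vec :: "real ^ 'k" where
  "ones_vec = (\<chi> i. 1)"

definition poisson_F :: "real ^ 'n ^ 'm \<Rightarrow> nat ^ 'm \<Rightarrow> real \<Rightarrow> real ^ 'n \<Rightarrow> real" where
  "poisson_F A y \<beta> f =
     ones_vec \<bullet> (A *v f) - (\<Sum>i\<in>UNIV. real (y $ i) * ln ((A *v f) $ i + \<beta>))"

definition spectral_norm :: "real ^ 'n ^ 'm \<Rightarrow> real" where
  "spectral_norm A = onorm (\<lambda>x. A *v x)"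

definition max_entry :: "real ^ 'k \<Rightarrow> real" where
  "max_entry v = Max (range (\<lambda>i. v $ i))"

definition lipschitz_const :: "'a::metric_space set \<Rightarrow> ('a \<Rightarrow> 'b::metric_space) \<Rightarrow> real" where
  "lipschitz_const S g = Inf {K. K-lipschitz_on S g}"

end

theory Submission
  imports Defs
begin

text \<open>The gradient is \<open>\<nabla>F(f) = A\<^sup>T w(f)\<close> with \<open>w(f)\<^sub>i = 1 - y\<^sub>i / ((A f)\<^sub>i + \<beta>)\<close>.
  On the nonnegative orthant \<open>(A f)\<^sub>i \<ge> 0\<close>, so \<open>t \<mapsto> 1/(t + \<beta>)\<close> is only evaluated on
  \<open>t \<ge> 0\<close>, where it is \<open>1/\<beta>\<^sup>2\<close>-Lipschitz; hence \<open>w\<close> is \<open>max(y)/\<beta>\<^sup>2 \<cdot> \<parallel>A\<parallel>\<^sub>2\<close>-Lipschitz and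
  \<open>\<nabla>F\<close> is \<open>max(y)/\<beta>\<^sup>2 \<cdot> \<parallel>A\<parallel>\<^sub>2\<^sup>2\<close>-Lipschitz, using \<open>\<parallel>A\<^sup>T\<parallel>\<^sub>2 = \<parallel>A\<parallel>\<^sub>2\<close>. The last inequality is
  the Schur test \<open>\<parallel>A\<parallel>\<^sub>2\<^sup>2 \<le> \<parallel>A\<parallel>\<^sub>1 \<parallel>A\<parallel>\<^sub>\<infinity>\<close> for nonnegative matrices, obtained from a weighted
  Cauchy-Schwarz inequality applied row by row.\<close>

lemma weighted_sum_square_le:
  fixes a x :: "'j::finite \<Rightarrow> real"
  assumes "\<And>j. 0 \<le> a j"
  shows "(\<Sum>j\<in>UNIV. a j * x j)\<^sup>2 \<le> (\<Sum>j\<in>UNIV. a j) * (\<Sum>j\<in>UNIV. a j * (x j)\<^sup>2)"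
proof -
  have "(\<Sum>j\<in>UNIV. a j * x j)\<^sup>2 = (\<Sum>j\<in>UNIV. sqrt (a j) * (sqrt (a j) * x j))\<^sup>2"
    using assms by (simp add: mult.assoc[symmetric])
  also have "\<dots> \<le> (\<Sum>j\<in>UNIV. (sqrt (a j))\<^sup>2) * (\<Sum>j\<in>UNIV. (sqrt (a j) * x j)\<^sup>2)"
    by (rule Cauchy_Schwarz_ineq_sum)
  also have "\<dots> = (\<Sum>j\<in>UNIV. a j) * (\<Sum>j\<in>UNIV. a j * (x j)\<^sup>2)"
    using assms by (simp add: power_mult_distrib)
  finally show ?thesis .
qed

lemma max_entry_ge: "v $ i \<le> max_entry v"
  unfolding max_entry_def by (rule Max_ge) auto

lemma matrix_row_sum_le_max_entry:
  fixes A :: "real ^ 'n ^ 'm"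
  shows "(\<Sum>j\<in>UNIV. A $ i $ j) \<le> max_entry (A *v (ones_vec :: real ^ 'n))"
  using max_entry_ge[of "A *v (ones_vec :: real ^ 'n)" i]
  by (simp add: matrix_vector_mult_def ones_vec_def)

lemma matrix_column_sum_le_max_entry:
  fixes A :: "real ^ 'n ^ 'm"
  shows "(\<Sum>i\<in>UNIV. A $ i $ j) \<le> max_entry (transpose A *v (ones_vec :: real ^ 'm))"
  using max_entry_ge[of "transpose A *v (ones_vec :: real ^ 'm)" j]
  by (simp add: matrix_vector_mult_def ones_vec_def transpose_def)

lemma norm_matrix_vector_mult_squared_le_row_column_sums:
  fixes A :: "real ^ 'n ^ 'm"
  assumes A_nonneg: "\<forall>i j. 0 \<le> A $ i $ j"
  shows "(norm (A *v x))\<^sup>2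
    \<le> max_entry (transpose A *v (ones_vec :: real ^ 'm))
      * max_entry (A *v (ones_vec :: real ^ 'n)) * (norm x)\<^sup>2"
proof -
  let ?R = "max_entry (A *v (ones_vec :: real ^ 'n))"
  let ?C = "max_entry (transpose A *v (ones_vec :: real ^ 'm))"
  have R_nonneg: "0 \<le> ?R"
    using matrix_row_sum_le_max_entry[of A undefined] A_nonneg by (meson order_trans sum_nonneg)
  have "(norm (A *v x))\<^sup>2 = (\<Sum>i\<in>UNIV. (\<Sum>j\<in>UNIV. A$i$j * x$j)\<^sup>2)"
    by (simp only: power2_norm_eq_inner) (simp add: inner_vec_def matrix_vector_mult_def power2_eq_square)
  also have "\<dots> \<le> (\<Sum>i\<in>UNIV. ?R * (\<Sum>j\<in>UNIV. A$i$j * (x$j)\<^sup>2))"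
  proof (rule sum_mono)
    fix i
    have "(\<Sum>j\<in>UNIV. A$i$j * x$j)\<^sup>2 \<le> (\<Sum>j\<in>UNIV. A$i$j) * (\<Sum>j\<in>UNIV. A$i$j * (x$j)\<^sup>2)"
      using weighted_sum_square_le[of "\<lambda>j. A$i$j" "\<lambda>j. x$j"] A_nonneg by simp
    also have "\<dots> \<le> ?R * (\<Sum>j\<in>UNIV. A$i$j * (x$j)\<^sup>2)"
      by (rule mult_right_mono[OF matrix_row_sum_le_max_entry]) (simp add: A_nonneg sum_nonneg)
    finally show "(\<Sum>j\<in>UNIV. A$i$j * x$j)\<^sup>2 \<le> ?R * (\<Sum>j\<in>UNIV. A$i$j * (x$j)\<^sup>2)" .
  qed
  also have "\<dots> = ?R * (\<Sum>j\<in>UNIV. \<Sum>i\<in>UNIV. A$i$j * (x$j)\<^sup>2)"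
    by (simp only: sum_distrib_left) (subst sum.swap, rule refl)
  also have "\<dots> = ?R * (\<Sum>j\<in>UNIV. (\<Sum>i\<in>UNIV. A$i$j) * (x$j)\<^sup>2)"
    by (simp only: sum_distrib_right)
  also have "\<dots> \<le> ?R * (\<Sum>j\<in>UNIV. ?C * (x$j)\<^sup>2)"
    by (intro mult_left_mono[OF _ R_nonneg] sum_mono mult_right_mono[OF matrix_column_sum_le_max_entry]) simp
  also have "\<dots> = ?C * ?R * (\<Sum>j\<in>UNIV. (x$j)\<^sup>2)"
    by (simp only: sum_distrib_left mult_ac)
  also have "\<dots> = ?C * ?R * (norm x)\<^sup>2"
    by (simp only: power2_norm_eq_inner) (simp only: inner_vec_def inner_real_def power2_eq_square)
  finally show ?thesis .
qed

lemma norm_matrix_vector_mult_le_spectral_norm: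
  "norm (A *v x) \<le> spectral_norm A * norm (x :: real ^ 'n)"
  unfolding spectral_norm_def by (rule onorm) (rule matrix_vector_mul_bounded_linear)

lemma spectral_norm_nonneg: "0 \<le> spectral_norm (A :: real ^ 'n ^ 'm)"
  unfolding spectral_norm_def by (rule onorm_pos_le) (rule matrix_vector_mul_bounded_linear)

lemma spectral_norm_squared_le:
  fixes A :: "real ^ 'n ^ 'm"
  assumes "0 \<le> c" and "\<And>x. (norm (A *v x))\<^sup>2 \<le> c * (norm x)\<^sup>2"
  shows "(spectral_norm A)\<^sup>2 \<le> c"
proof -
  have "spectral_norm A \<le> sqrt c"
    unfolding spectral_norm_def
  proof (rule onorm_le)
    fix x :: "real ^ 'n"
    have "sqrt ((norm (A *v x))\<^sup>2) \<le> sqrt (c * (norm x)\<^sup>2)"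
      using assms(2) by (rule real_sqrt_le_mono)
    then show "norm (A *v x) \<le> sqrt c * norm x" by (simp add: real_sqrt_mult)
  qed
  then show ?thesis
    using power_mono[OF _ spectral_norm_nonneg, of A "sqrt c" 2] assms(1) by simp
qed

lemma spectral_norm_squared_le_row_column_sums:
  fixes A :: "real ^ 'n ^ 'm"
  assumes A_nonneg: "\<forall>i j. 0 \<le> A $ i $ j"
  shows "(spectral_norm A)\<^sup>2
    \<le> max_entry (transpose A *v (ones_vec :: real ^ 'm)) * max_entry (A *v (ones_vec :: real ^ 'n))"
proof (rule spectral_norm_squared_le[OF _ norm_matrix_vector_mult_squared_le_row_column_sums[OF A_nonneg]])
  have "0 \<le> max_entry (A *v (ones_vec :: real ^ 'n))"
    using matrix_row_sum_le_max_entry[of A undefined] A_nonneg by (meson order_trans sum_nonneg)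
  moreover have "0 \<le> max_entry (transpose A *v (ones_vec :: real ^ 'm))"
    using matrix_column_sum_le_max_entry[of A undefined] A_nonneg by (meson order_trans sum_nonneg)
  ultimately show "0 \<le> max_entry (transpose A *v (ones_vec :: real ^ 'm)) * max_entry (A *v (ones_vec :: real ^ 'n))"
    by simp
qed

lemma norm_transpose_mult_le_spectral_norm:
  "norm (transpose A *v w) \<le> spectral_norm (A :: real ^ 'n ^ 'm) * norm w"
proof -
  let ?v = "transpose A *v w"
  have "(norm ?v)\<^sup>2 = w \<bullet> (A *v ?v)"
    by (simp add: power2_norm_eq_inner dot_lmul_matrix[symmetric])
  also have "\<dots> \<le> norm w * norm (A *v ?v)"
    by (rule Cauchy_Schwarz_ineq2[THEN order_trans[OF abs_ge_self]])
  also have "\<dots> \<le> norm w * (spectral_norm A * norm ?v)"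
    by (rule mult_left_mono[OF norm_matrix_vector_mult_le_spectral_norm]) simp
  finally have "norm ?v * norm ?v \<le> (spectral_norm A * norm w) * norm ?v"
    by (simp add: power2_eq_square mult_ac)
  then show ?thesis
    by (cases "norm ?v = 0") (auto simp: mult_le_cancel_right spectral_norm_nonneg)
qed

lemma norm_le_if_componentwise_abs_le:
  fixes a b :: "real ^ 'k"
  assumes "\<And>i. \<bar>a $ i\<bar> \<le> c * \<bar>b $ i\<bar>" and "0 \<le> c"
  shows "norm a \<le> c * norm b"
proof -
  have "norm a = L2_set (\<lambda>i. \<bar>a $ i\<bar>) UNIV" by (simp add: norm_vec_def)
  also have "\<dots> \<le> L2_set (\<lambda>i. c * \<bar>b $ i\<bar>) UNIV"
    by (rule L2_set_mono) (use assms in auto)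
  also have "\<dots> = c * norm b"
    by (simp add: L2_set_right_distrib[symmetric, OF assms(2)] norm_vec_def)
  finally show ?thesis .
qed

lemma lipschitz_const_le:
  assumes "K-lipschitz_on S g"
  shows "lipschitz_const S g \<le> K"
  unfolding lipschitz_const_def
  by (rule cInf_lower) (use assms in \<open>auto simp: bdd_below_def lipschitz_on_def\<close>)

lemma inverse_shift_diff_le:
  fixes u v \<beta> :: real
  assumes "0 \<le> u" "0 \<le> v" "0 < \<beta>"
  shows "\<bar>1 / (u + \<beta>) - 1 / (v + \<beta>)\<bar> \<le> \<bar>u - v\<bar> / \<beta>\<^sup>2"
proof -
  have diff: "1 / (u + \<beta>) - 1 / (v + \<beta>) = (v - u) / ((u + \<beta>) * (v + \<beta>))"
    using assms by (simp add: field_simps)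
  have "\<beta>\<^sup>2 \<le> (u + \<beta>) * (v + \<beta>)"
    using assms by (simp add: power2_eq_square mult_mono)
  then have "\<bar>v - u\<bar> / ((u + \<beta>) * (v + \<beta>)) \<le> \<bar>v - u\<bar> / \<beta>\<^sup>2"
    using assms by (intro divide_left_mono) auto
  then show ?thesis using assms by (simp add: diff abs_divide abs_minus_commute)
qed

lemma matrix_vector_mult_nonneg_orthant:
  fixes A :: "real ^ 'n ^ 'm"
  assumes "\<forall>i j. 0 \<le> A $ i $ j" and "f \<in> nonneg_orthant"
  shows "0 \<le> (A *v f) $ i"
  using assms unfolding nonneg_orthant_def
  by (auto simp: matrix_vector_mult_def intro!: sum_nonneg)

definition poisson_weights :: "real ^ 'n ^ 'm \<Rightarrow> nat ^ 'm \<Rightarrow> real \<Rightarrow> real ^ 'n \<Rightarrow> real ^ 'm" where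
  "poisson_weights A y \<beta> f = (\<chi> i. 1 - real (y $ i) / ((A *v f) $ i + \<beta>))"

definition poisson_grad :: "real ^ 'n ^ 'm \<Rightarrow> nat ^ 'm \<Rightarrow> real \<Rightarrow> real ^ 'n \<Rightarrow> real ^ 'n" where
  "poisson_grad A y \<beta> f = transpose A *v poisson_weights A y \<beta> f"

lemma has_derivative_poisson_F:
  fixes A :: "real ^ 'n ^ 'm"
  assumes pos: "\<And>i. 0 < (A *v f) $ i + \<beta>"
  shows "(poisson_F A y \<beta> has_derivative (\<lambda>h. poisson_grad A y \<beta> f \<bullet> h)) (at f)"
proof -
  have ones_term: "((\<lambda>f. ones_vec \<bullet> (A *v f)) has_derivative (\<lambda>h. ones_vec \<bullet> (A *v h))) (at f)"
    by (intro bounded_linear_imp_has_derivative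
        bounded_linear_compose[OF bounded_linear_inner_right matrix_vector_mul_bounded_linear])
  have affine_entry: "((\<lambda>f. (A *v f)$i + \<beta>) has_derivative (\<lambda>h. (A *v h)$i)) (at f)" for i
    by (intro has_derivative_add_const bounded_linear_imp_has_derivative
        bounded_linear_compose[OF bounded_linear_vec_nth matrix_vector_mul_bounded_linear])
  have log_term: "((\<lambda>f. ln ((A *v f)$i + \<beta>)) has_derivative
      (\<lambda>h. (A *v h)$i * inverse ((A *v f)$i + \<beta>))) (at f)" for i
    by (rule DERIV_compose_FDERIV[OF DERIV_ln[OF pos] affine_entry])
  have "(poisson_F A y \<beta> has_derivative
      (\<lambda>h. ones_vec \<bullet> (A *v h) - (\<Sum>i\<in>UNIV. real (y$i) * ((A *v h)$i * inverse ((A *v f)$i + \<beta>))))) (at f)"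
    unfolding poisson_F_def[abs_def]
    by (intro has_derivative_diff ones_term has_derivative_sum has_derivative_mult_right log_term)
  moreover have "poisson_grad A y \<beta> f \<bullet> h
      = ones_vec \<bullet> (A *v h) - (\<Sum>i\<in>UNIV. real (y$i) * ((A *v h)$i * inverse ((A *v f)$i + \<beta>)))" for h
  proof -
    have "poisson_grad A y \<beta> f \<bullet> h = poisson_weights A y \<beta> f \<bullet> (A *v h)"
      unfolding poisson_grad_def by (simp add: dot_lmul_matrix)
    also have "\<dots> = (\<Sum>i\<in>UNIV. (1 - real (y$i) / ((A *v f)$i + \<beta>)) * (A *v h)$i)"
      by (simp add: poisson_weights_def inner_vec_def)
    also have "\<dots> = ones_vec \<bullet> (A *v h)
        - (\<Sum>i\<in>UNIV. real (y$i) * ((A *v h)$i * inverse ((A *v f)$i + \<beta>)))"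
      by (simp add: ones_vec_def inner_vec_def right_diff_distrib sum_subtractf divide_inverse
          mult.left_commute mult.commute)
    finally show ?thesis .
  qed
  ultimately show ?thesis by simp
qed

lemma poisson_weights_lipschitz:
  fixes A :: "real ^ 'n ^ 'm"
  assumes A_nonneg: "\<forall>i j. 0 \<le> A $ i $ j" and beta_pos: "0 < \<beta>"
    and f: "f \<in> nonneg_orthant" and g: "g \<in> nonneg_orthant"
  shows "norm (poisson_weights A y \<beta> f - poisson_weights A y \<beta> g)
    \<le> real (Max (range (\<lambda>i. y $ i))) / \<beta>\<^sup>2 * norm (A *v (f - g))"
proof (rule norm_le_if_componentwise_abs_le)
  let ?M = "real (Max (range (\<lambda>i. y $ i)))"
  fix i
  have Af: "0 \<le> (A *v f)$i" and Ag: "0 \<le> (A *v g)$i"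
    using matrix_vector_mult_nonneg_orthant[OF A_nonneg] f g by auto
  have "(poisson_weights A y \<beta> f - poisson_weights A y \<beta> g)$i
      = real (y$i) * (1 / ((A *v g)$i + \<beta>) - 1 / ((A *v f)$i + \<beta>))"
    by (simp add: poisson_weights_def right_diff_distrib)
  then have "\<bar>(poisson_weights A y \<beta> f - poisson_weights A y \<beta> g)$i\<bar>
      = real (y$i) * \<bar>1 / ((A *v g)$i + \<beta>) - 1 / ((A *v f)$i + \<beta>)\<bar>"
    by (simp add: abs_mult)
  also have "\<dots> \<le> ?M * (\<bar>(A *v g)$i - (A *v f)$i\<bar> / \<beta>\<^sup>2)"
    by (intro mult_mono inverse_shift_diff_le[OF Ag Af beta_pos]) (auto simp: Max_ge)
  also have "\<dots> = ?M / \<beta>\<^sup>2 * \<bar>(A *v (f - g))$i\<bar>"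
    by (simp add: matrix_vector_mult_diff_distrib abs_minus_commute)
  finally show "\<bar>(poisson_weights A y \<beta> f - poisson_weights A y \<beta> g)$i\<bar> \<le> ?M / \<beta>\<^sup>2 * \<bar>(A *v (f - g))$i\<bar>" .
qed simp

lemma poisson_grad_lipschitz:
  fixes A :: "real ^ 'n ^ 'm"
  assumes A_nonneg: "\<forall>i j. 0 \<le> A $ i $ j" and beta_pos: "0 < \<beta>"
  shows "(real (Max (range (\<lambda>i. y $ i))) / \<beta>\<^sup>2 * (spectral_norm A)\<^sup>2)-lipschitz_on
    nonneg_orthant (poisson_grad A y \<beta>)"
proof (rule lipschitz_onI)
  let ?M = "real (Max (range (\<lambda>i. y $ i)))" and ?S = "spectral_norm A"
  fix f g :: "real ^ 'n"
  assume f: "f \<in> nonneg_orthant" and g: "g \<in> nonneg_orthant"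
  have "dist (poisson_grad A y \<beta> f) (poisson_grad A y \<beta> g)
      = norm (transpose A *v (poisson_weights A y \<beta> f - poisson_weights A y \<beta> g))"
    by (simp add: poisson_grad_def dist_norm matrix_vector_mult_diff_distrib)
  also have "\<dots> \<le> ?S * norm (poisson_weights A y \<beta> f - poisson_weights A y \<beta> g)"
    by (rule norm_transpose_mult_le_spectral_norm)
  also have "\<dots> \<le> ?S * (?M / \<beta>\<^sup>2 * norm (A *v (f - g)))"
    by (intro mult_left_mono poisson_weights_lipschitz assms f g spectral_norm_nonneg)
  also have "\<dots> \<le> ?S * (?M / \<beta>\<^sup>2 * (?S * norm (f - g)))"
    by (intro mult_left_mono norm_matrix_vector_mult_le_spectral_norm spectral_norm_nonneg) auto
  also have "\<dots> = ?M / \<beta>\<^sup>2 * ?S\<^sup>2 * dist f g"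
    by (simp add: dist_norm power2_eq_square mult_ac)
  finally show "dist (poisson_grad A y \<beta> f) (poisson_grad A y \<beta> g) \<le> ?M / \<beta>\<^sup>2 * ?S\<^sup>2 * dist f g" .
qed simp

theorem lemma1:
  fixes A :: "real ^ 'n ^ 'm" and y :: "nat ^ 'm" and \<beta> :: real
  assumes A_nonneg: "\<forall>i j. 0 \<le> A $ i $ j"
    and beta_pos: "0 < \<beta>"
  shows "\<exists>G :: real ^ 'n \<Rightarrow> real ^ 'n.
           (\<forall>f\<in>nonneg_orthant. (poisson_F A y \<beta> has_derivative (\<lambda>h. G f \<bullet> h)) (at f))
         \<and> (\<exists>K. K-lipschitz_on nonneg_orthant G)
         \<and> lipschitz_const nonneg_orthant G
              \<le> real (Max (range (\<lambda>i. y $ i))) / \<beta>\<^sup>2 * (spectral_norm A)\<^sup>2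
         \<and> real (Max (range (\<lambda>i. y $ i))) / \<beta>\<^sup>2 * (spectral_norm A)\<^sup>2
              \<le> real (Max (range (\<lambda>i. y $ i))) / \<beta>\<^sup>2
                 * max_entry (transpose A *v (ones_vec :: real ^ 'm))
                 * max_entry (A *v (ones_vec :: real ^ 'n))"
proof (intro exI[of _ "poisson_grad A y \<beta>"] conjI ballI)
  show "(poisson_F A y \<beta> has_derivative (\<lambda>h. poisson_grad A y \<beta> f \<bullet> h)) (at f)"
    if "f \<in> nonneg_orthant" for f
    using matrix_vector_mult_nonneg_orthant[OF A_nonneg that] beta_pos
    by (intro has_derivative_poisson_F) (simp add: add_nonneg_pos)
  note lip = poisson_grad_lipschitz[OF A_nonneg beta_pos, of y]
  then show "\<exists>K. K-lipschitz_on nonneg_orthant (poisson_grad A y \<beta>)" ..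
  show "lipschitz_const nonneg_orthant (poisson_grad A y \<beta>)
      \<le> real (Max (range (\<lambda>i. y $ i))) / \<beta>\<^sup>2 * (spectral_norm A)\<^sup>2"
    using lip by (rule lipschitz_const_le)
  show "real (Max (range (\<lambda>i. y $ i))) / \<beta>\<^sup>2 * (spectral_norm A)\<^sup>2
      \<le> real (Max (range (\<lambda>i. y $ i))) / \<beta>\<^sup>2
        * max_entry (transpose A *v (ones_vec :: real ^ 'm)) * max_entry (A *v (ones_vec :: real ^ 'n))"
    using mult_left_mono[OF spectral_norm_squared_le_row_column_sums[OF A_nonneg],
        of "real (Max (range (\<lambda>i. y $ i))) / \<beta>\<^sup>2"]
    by (simp add: mult_ac)
qed

end
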